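(* Let $(D,F,B)$ with $D=(\mathcal V,\mathcal A)$ be a restricted instance (i.e. $\mathcal B\subseteq\mathcal F$) with $\mathcal F\neq\emptyset$, and let $\mathrm{TC}(D)=(\mathcal V,\mathcal A')$ be the transitive closure of $D$, equipped with the same functions $F$ and $B$. Then $(D,F,B)$ admits a positive answer to the All-ST problem if and only if $(\mathrm{TC}(D),F,B)$ admits a tree-like solution to the All-ST problem such that the underlying graph of the union of its walks has at most $2|\mathcal F|-1$ vertices.
   Context: A snow team instance is a digraph $D=(\mathcal V,\mathcal A)$ of order $n$ whose underlying simple undirected graph is connected, together with functions $F:\mathcal V\to\{0,1\}$ and $B:\mathcal V\to\mathbb N$. Vertices of $\mathcal F=F^{-1}(1)$ are called facilities (terminals), vertices of $\mathcal B=B^{-1}(\mathbb N^+)$ are called snow team bases, and $\mathbf k_B=\sum_{v\in\mathcal V}B(v)$. The Snow Team problem (ST) asks: do there exist $\mathbf k_B$ directed walks in $D$, exactly $B(v)$ of which start at each vertex $v\in\mathcal V$, such that, letting $H$ be the subgraph of $D$ consisting of the vertices and arcs of these walks, all vertices of $\mathcal F$ lie in one connected component of the underlying undirected graph of $H$? Such a family of walks is called a solution. The All-ST problem is the ST problem restricted to instances satisfying $\mathcal B\subseteq\mathcal F$ (called restricted instances). The transitive closure $\mathrm{TC}(D)$ has vertex set $\mathcal V$ and an arc $(u,v)$, $u\ne v$, whenever $D$ contains a directed path from $u$ to $v$. A solution $\mathcal W$ is tree-like if its walks are strongly arc-distinct (no arc is traversed by two walks or twice by one walk, and no two walks, or one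 walk, traverse both an arc $(u,v)$ and its reverse $(v,u)$), and the underlying undirected graph of the union of the walks is acyclic and contains a Steiner tree for $\mathcal F$ (a subtree containing all vertices of $\mathcal F$). *)

theory Defs
  imports Main
begin

definition underlying_edges :: "('a \<times> 'a) set \<Rightarrow> 'a set set" where
  "underlying_edges A = {{u, v} | u v. (u, v) \<in> A \<and> u \<noteq> v}"

definition ug_adj :: "'a set set \<Rightarrow> ('a \<times> 'a) set" where
  "ug_adj E = {(x, y). {x, y} \<in> E}"

definition ug_connected :: "'a set \<Rightarrow> 'a set set \<Rightarrow> bool" where
  "ug_connected Vs E \<longleftrightarrow> (\<forall>u\<in>Vs. \<forall>v\<in>Vs. (u, v) \<in> (ug_adj E)\<^sup>*)"

definition ug_cycle :: "'a set set \<Rightarrow> 'a list \<Rightarrow> bool" where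
  "ug_cycle E cs \<longleftrightarrow> length cs \<ge> 3 \<and> distinct cs \<and>
     (\<forall>i<length cs. {cs ! i, cs ! ((i + 1) mod length cs)} \<in> E)"

definition ug_acyclic :: "'a set set \<Rightarrow> bool" where
  "ug_acyclic E \<longleftrightarrow> \<not> (\<exists>cs. ug_cycle E cs)"

text \<open>Snow team instance (D = (V, A), F, B); facilities given as the set F = F^{-1}(1).\<close>
definition st_instance :: "'a set \<Rightarrow> ('a \<times> 'a) set \<Rightarrow> 'a set \<Rightarrow> ('a \<Rightarrow> nat) \<Rightarrow> bool" where
  "st_instance V A F B \<longleftrightarrow> finite V \<and> A \<subseteq> V \<times> V \<and>
     ug_connected V (underlying_edges A) \<and> F \<subseteq> V \<and> (\<forall>v. v \<notin> V \<longrightarrow> B v = 0)"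

definition restricted_instance :: "'a set \<Rightarrow> ('a \<times> 'a) set \<Rightarrow> 'a set \<Rightarrow> ('a \<Rightarrow> nat) \<Rightarrow> bool" where
  "restricted_instance V A F B \<longleftrightarrow> st_instance V A F B \<and> {v. B v > 0} \<subseteq> F"

definition transitive_closure_arcs :: "('a \<times> 'a) set \<Rightarrow> ('a \<times> 'a) set" where
  "transitive_closure_arcs A = {(u, v). u \<noteq> v \<and> (u, v) \<in> A\<^sup>+}"

definition is_walk :: "'a set \<Rightarrow> ('a \<times> 'a) set \<Rightarrow> 'a list \<Rightarrow> bool" where
  "is_walk V A w \<longleftrightarrow> w \<noteq> [] \<and> set w \<subseteq> V \<and>
     (\<forall>i. Suc i < length w \<longrightarrow> (w ! i, w ! Suc i) \<in> A)"

definition walk_arcs :: "'a list \<Rightarrow> ('a \<times> 'a) list" where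
  "walk_arcs w = zip w (tl w)"

definition kB :: "'a set \<Rightarrow> ('a \<Rightarrow> nat) \<Rightarrow> nat" where
  "kB V B = sum B V"

definition fam_verts :: "nat \<Rightarrow> (nat \<Rightarrow> 'a list) \<Rightarrow> 'a set" where
  "fam_verts k W = (\<Union>i<k. set (W i))"

definition fam_arcs :: "nat \<Rightarrow> (nat \<Rightarrow> 'a list) \<Rightarrow> ('a \<times> 'a) set" where
  "fam_arcs k W = (\<Union>i<k. set (walk_arcs (W i)))"

definition st_solution :: "'a set \<Rightarrow> ('a \<times> 'a) set \<Rightarrow> 'a set \<Rightarrow> ('a \<Rightarrow> nat) \<Rightarrow> (nat \<Rightarrow> 'a list) \<Rightarrow> bool" where
  "st_solution V A F B W \<longleftrightarrow>
     (\<forall>i<kB V B. is_walk V A (W i)) \<and>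
     (\<forall>v\<in>V. card {i. i < kB V B \<and> hd (W i) = v} = B v) \<and>
     F \<subseteq> fam_verts (kB V B) W \<and>
     (\<forall>f\<in>F. \<forall>g\<in>F. (f, g) \<in> (fam_arcs (kB V B) W \<union> (fam_arcs (kB V B) W)\<inverse>)\<^sup>*)"

definition strongly_arc_distinct :: "nat \<Rightarrow> (nat \<Rightarrow> 'a list) \<Rightarrow> bool" where
  "strongly_arc_distinct k W \<longleftrightarrow>
     (let L = concat (map (\<lambda>i. walk_arcs (W i)) [0..<k])
      in distinct L \<and> (\<forall>(u, v)\<in>set L. (v, u) \<notin> set L))"

definition tree_like_solution :: "'a set \<Rightarrow> ('a \<times> 'a) set \<Rightarrow> 'a set \<Rightarrow> ('a \<Rightarrow> nat) \<Rightarrow> (nat \<Rightarrow> 'a list) \<Rightarrow> bool" where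
  "tree_like_solution V A F B W \<longleftrightarrow>
     st_solution V A F B W \<and>
     strongly_arc_distinct (kB V B) W \<and>
     ug_acyclic (underlying_edges (fam_arcs (kB V B) W)) \<and>
     (\<exists>Vt Et. Vt \<subseteq> fam_verts (kB V B) W \<and> Et \<subseteq> underlying_edges (fam_arcs (kB V B) W) \<and>
        (\<forall>e\<in>Et. e \<subseteq> Vt) \<and> ug_connected Vt Et \<and> ug_acyclic Et \<and> F \<subseteq> Vt)"

end

theory Submission
  imports Defs Complex_Main
begin

text \<open>
  Backward direction: an arc of TC(D) expands into a directed path of D, so expanding every walk
  of a solution in TC(D) gives walks in D with the same starting points whose arcs connect at
  least as much.

  Forward direction: in a restricted instance every walk of a solution starts at a facility, and
  as the walks connect all facilities they can be processed in an order in which each walk meets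
  an earlier one. From each walk we keep a subsequence of pairwise distinct vertices that starts at
  its first vertex; such a subsequence is a walk of TC(D). The kept subsequences always form a
  tree in which every edge is used by exactly one of them. A new walk is attached at its first
  vertex if that already lies in the tree, and otherwise by one edge to a vertex it shares with an
  earlier walk, that vertex being inserted into the earlier subsequence first (as a new leaf or by
  subdividing an edge). Finally all facilities of the new walk are inserted in the same way. The
  first vertex of the tree is a facility and every non-facility vertex enters together with a new
  facility, so the tree has at most 2|F| - 1 vertices.
\<close>

definition arc_edge :: "'a \<times> 'a \<Rightarrow> 'a set" where
  "arc_edge a = {fst a, snd a}"

lemma arc_edge_Pair [simp]: "arc_edge (u, v) = {u, v}"
  by (simp add: arc_edge_def)

lemma walk_arcs_simps [simp]:
  "walk_arcs [] = []" "walk_arcs [x] = []" "walk_arcs (x # y # xs) = (x, y) # walk_arcs (y # xs)"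
  by (simp_all add: walk_arcs_def)

lemma walk_arcs_append:
  "xs \<noteq> [] \<Longrightarrow> ys \<noteq> [] \<Longrightarrow> walk_arcs (xs @ ys) = walk_arcs xs @ (last xs, hd ys) # walk_arcs ys"
  by (induction xs rule: induct_list012) (auto simp: neq_Nil_conv)

lemma walk_arcs_snoc: "xs \<noteq> [] \<Longrightarrow> walk_arcs (xs @ [z]) = walk_arcs xs @ [(last xs, z)]"
  using walk_arcs_append[of xs "[z]"] by simp

lemma walk_arcs_glue:
  "xs \<noteq> [] \<Longrightarrow> last xs = hd ys \<Longrightarrow> walk_arcs (xs @ tl ys) = walk_arcs xs @ walk_arcs ys"
  by (cases ys; cases "tl ys") (auto simp: walk_arcs_append)

lemma set_walk_arcsD: "(a, b) \<in> set (walk_arcs w) \<Longrightarrow> a \<in> set w \<and> b \<in> set w"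
  by (induction w rule: induct_list012) auto

lemma distinct_walk_arcs_edges: "distinct w \<Longrightarrow> distinct (map arc_edge (walk_arcs w))"
  by (induction w rule: induct_list012) (fastforce dest: set_walk_arcsD simp: doubleton_eq_iff)+

lemma distinct_walk_arcs_neq: "distinct w \<Longrightarrow> (a, b) \<in> set (walk_arcs w) \<Longrightarrow> a \<noteq> b"
  by (induction w rule: induct_list012) auto

definition path_edges :: "'a list \<Rightarrow> 'a set set" where
  "path_edges w = arc_edge ` set (walk_arcs w)"

lemma path_edges_Nil [simp]: "path_edges [] = {}"
  by (simp add: path_edges_def)

lemma path_edges_singleton [simp]: "path_edges [x] = {}"
  by (simp add: path_edges_def)

lemma path_edges_pair [simp]: "path_edges [x, y] = {{x, y}}"
  by (simp add: path_edges_def)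

lemma path_edges_subset: "e \<in> path_edges w \<Longrightarrow> e \<subseteq> set w"
  by (auto simp: path_edges_def dest: set_walk_arcsD)

lemma path_edges_insert_last:
  "as \<noteq> [] \<Longrightarrow> path_edges (as @ [z]) = insert {last as, z} (path_edges as)"
  by (simp add: path_edges_def walk_arcs_snoc)

lemma path_edges_insert_inner:
  assumes "as \<noteq> []" "bs \<noteq> []" "distinct (as @ bs)"
  shows "path_edges (as @ z # bs) =
    insert {last as, z} (insert {z, hd bs} (path_edges (as @ bs) - {{last as, hd bs}}))"
proof -
  have "distinct (map arc_edge (walk_arcs as @ (last as, hd bs) # walk_arcs bs))"
    using distinct_walk_arcs_edges[OF assms(3)] walk_arcs_append[OF assms(1,2)] by simp
  then have "{last as, hd bs} \<notin> arc_edge ` (set (walk_arcs as) \<union> set (walk_arcs bs))" by auto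
  moreover have "walk_arcs (z # bs) = (z, hd bs) # walk_arcs bs" using assms(2) by (cases bs) auto
  ultimately show ?thesis
    using assms by (auto simp: path_edges_def walk_arcs_append)
qed

lemma is_walk_singleton [simp]: "is_walk V A [x] \<longleftrightarrow> x \<in> V"
  by (simp add: is_walk_def)

lemma is_walk_Cons_Cons [simp]:
  "is_walk V A (x # y # ys) \<longleftrightarrow> x \<in> V \<and> (x, y) \<in> A \<and> is_walk V A (y # ys)"
  by (auto simp: is_walk_def nth_Cons split: nat.splits)

lemma is_walk_append:
  "is_walk V A xs \<Longrightarrow> is_walk V A (y # ys) \<Longrightarrow> last xs = y \<Longrightarrow> is_walk V A (xs @ ys)"
  by (induction xs rule: induct_list012) (auto simp: is_walk_def[of _ _ "[]"])

lemma is_walk_glue: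
  "is_walk V A xs \<Longrightarrow> is_walk V A ys \<Longrightarrow> last xs = hd ys \<Longrightarrow> is_walk V A (xs @ tl ys)"
  by (cases ys) (auto simp: is_walk_def[of _ _ "[]"] intro: is_walk_append)

lemma is_walk_reaches: "is_walk V A (x # xs) \<Longrightarrow> y \<in> set xs \<Longrightarrow> (x, y) \<in> A\<^sup>+"
  by (induction xs arbitrary: x) (auto intro: trancl_into_trancl2)

lemma nths_split:
  "p < length xs \<Longrightarrow>
   nths xs P = nths xs {q\<in>P. q < p} @ (if p \<in> P then [xs ! p] else []) @ nths xs {q\<in>P. p < q}"
proof (induction xs arbitrary: p P)
  case (Cons x xs)
  show ?case
  proof (cases p)
    case 0
    then show ?thesis by (simp add: nths_Cons)
  next
    case (Suc p')
    have shift: "{j. Suc j \<in> {q\<in>P. q < p}} = {q\<in>{j. Suc j \<in> P}. q < p'}"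
      "{j. Suc j \<in> {q\<in>P. p < q}} = {q\<in>{j. Suc j \<in> P}. p' < q}"
      using Suc by auto
    have "p' < length xs" using Cons.prems Suc by simp
    from Cons.IH[OF this, of "{j. Suc j \<in> P}"] show ?thesis
      using Suc by (simp add: nths_Cons shift)
  qed
qed simp

lemma nths_insert:
  assumes "p < length xs" "p \<notin> P"
  shows "nths xs P = nths xs {q\<in>P. q < p} @ nths xs {q\<in>P. p < q}"
    and "nths xs (insert p P) = nths xs {q\<in>P. q < p} @ xs ! p # nths xs {q\<in>P. p < q}"
proof -
  have "{q\<in>insert p P. q < p} = {q\<in>P. q < p}" "{q\<in>insert p P. p < q} = {q\<in>P. p < q}"
    by auto
  then show "nths xs P = nths xs {q\<in>P. q < p} @ nths xs {q\<in>P. p < q}"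
    "nths xs (insert p P) = nths xs {q\<in>P. q < p} @ xs ! p # nths xs {q\<in>P. p < q}"
    using nths_split[OF assms(1), of P] nths_split[OF assms(1), of "insert p P"] assms(2) by simp_all
qed

lemma nths_Cons_zero: "0 \<in> P \<Longrightarrow> nths (x # xs) P = x # nths xs {j. Suc j \<in> P}"
  by (simp add: nths_Cons)

lemma nths_hd: "0 \<in> P \<Longrightarrow> xs \<noteq> [] \<Longrightarrow> nths xs P \<noteq> [] \<and> hd (nths xs P) = hd xs"
  by (cases xs) (simp_all add: nths_Cons_zero)

lemma nths_singleton_nth: "i < length xs \<Longrightarrow> nths xs {i} = [xs ! i]"
  by (induction xs arbitrary: i) (auto simp: nths_Cons nth_Cons split: nat.splits)

section \<open>Walks in the transitive closure\<close>

lemma is_walk_nths_transitive_closure: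
  "is_walk V A w \<Longrightarrow> distinct (nths w P) \<Longrightarrow> nths w P \<noteq> [] \<Longrightarrow>
   is_walk V (transitive_closure_arcs A) (nths w P)"
proof (induction w arbitrary: P)
  case (Cons x xs)
  let ?P' = "{j. Suc j \<in> P}"
  show ?case
  proof (cases "0 \<in> P")
    case True
    then have nths: "nths (x # xs) P = x # nths xs ?P'" by (rule nths_Cons_zero)
    have "x \<in> V" using Cons.prems(1) by (simp add: is_walk_def)
    show ?thesis
    proof (cases "nths xs ?P' = []")
      case True
      with nths \<open>x \<in> V\<close> show ?thesis by simp
    next
      case False
      then obtain y ys where rest: "nths xs ?P' = y # ys" by (auto simp: neq_Nil_conv)
      then have "y \<in> set xs" using set_nths_subset by (metis list.set_intros(1) subsetD)
      then have "is_walk V A xs" using Cons.prems(1) by (cases xs) auto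
      then have "is_walk V (transitive_closure_arcs A) (y # ys)"
        using Cons.IH[of ?P'] Cons.prems(2) nths rest by simp
      moreover have "(x, y) \<in> A\<^sup>+" using is_walk_reaches[OF Cons.prems(1) \<open>y \<in> set xs\<close>] .
      moreover have "x \<noteq> y" using Cons.prems(2) nths rest by auto
      ultimately show ?thesis using nths rest \<open>x \<in> V\<close> by (simp add: transitive_closure_arcs_def)
    qed
  next
    case False
    then have "nths (x # xs) P = nths xs ?P'" by (simp add: nths_Cons)
    moreover have "is_walk V A xs" using Cons.prems calculation
      by (cases xs) (auto simp: is_walk_def)
    ultimately show ?thesis using Cons.IH Cons.prems by simp
  qed
qed (simp add: is_walk_def)

lemma walk_of_trancl:
  assumes "(a, b) \<in> A\<^sup>+" "A \<subseteq> V \<times> V"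
  shows "\<exists>p. is_walk V A p \<and> hd p = a \<and> last p = b \<and> (a, b) \<in> (set (walk_arcs p))\<^sup>+"
  using assms(1)
proof (induction rule: trancl_induct)
  case (base y)
  with assms(2) show ?case by (intro exI[of _ "[a, y]"]) auto
next
  case (step y z)
  then obtain p where p: "is_walk V A p" "hd p = a" "last p = y" "(a, y) \<in> (set (walk_arcs p))\<^sup>+"
    by blast
  have "p \<noteq> []" using p(1) by (simp add: is_walk_def)
  have walk: "is_walk V A (p @ [z])"
    using is_walk_glue[OF p(1), of "[y, z]"] p(3) step.hyps(2) assms(2) by auto
  have arcs: "set (walk_arcs (p @ [z])) = insert (y, z) (set (walk_arcs p))"
    using walk_arcs_snoc[OF \<open>p \<noteq> []\<close>] p(3) by simp
  have "(a, y) \<in> (set (walk_arcs (p @ [z])))\<^sup>+"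
    using p(4) by (rule trancl_mono) (auto simp: arcs)
  then have "(a, z) \<in> (set (walk_arcs (p @ [z])))\<^sup>+"
    by (rule trancl_into_trancl) (simp add: arcs)
  with walk show ?case using p(2) \<open>p \<noteq> []\<close> by (intro exI[of _ "p @ [z]"]) simp
qed

lemma expand_transitive_closure_walk:
  assumes "A \<subseteq> V \<times> V"
  shows "is_walk V (transitive_closure_arcs A) w \<Longrightarrow> \<exists>w'. is_walk V A w' \<and> hd w' = hd w \<and>
    set w \<subseteq> set w' \<and> set (walk_arcs w) \<subseteq> (set (walk_arcs w'))\<^sup>+"
proof (induction w rule: induct_list012)
  case (3 x y r)
  then obtain w1 where w1: "is_walk V A w1" "hd w1 = y" "set (y # r) \<subseteq> set w1"
      "set (walk_arcs (y # r)) \<subseteq> (set (walk_arcs w1))\<^sup>+"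
    by auto
  have "(x, y) \<in> A\<^sup>+" using "3.prems" by (simp add: transitive_closure_arcs_def)
  then obtain p where p: "is_walk V A p" "hd p = x" "last p = y" "(x, y) \<in> (set (walk_arcs p))\<^sup>+"
    using walk_of_trancl[OF _ assms] by blast
  have "p \<noteq> []" using p(1) by (simp add: is_walk_def)
  define w' where "w' = p @ tl w1"
  have arcs: "walk_arcs w' = walk_arcs p @ walk_arcs w1"
    unfolding w'_def using walk_arcs_glue[OF \<open>p \<noteq> []\<close>] p(3) w1(2) by simp
  have "(set (walk_arcs p))\<^sup>+ \<union> (set (walk_arcs w1))\<^sup>+ \<subseteq> (set (walk_arcs w'))\<^sup>+"
    unfolding arcs by (auto intro: trancl_mono)
  moreover have "set w1 \<subseteq> set w'"
    using w1(2) p(3) \<open>p \<noteq> []\<close> unfolding w'_def by (cases w1) auto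
  moreover have "is_walk V A w'" unfolding w'_def using is_walk_glue[OF p(1) w1(1)] p(3) w1(2) by simp
  ultimately show ?case using p(2,4) w1(3,4) \<open>p \<noteq> []\<close> by (intro exI[of _ w']) (auto simp: w'_def)
next
  case (2 x)
  then show ?case by (intro exI[of _ "[x]"]) simp
qed (simp add: is_walk_def)

lemma symmetric_rtrancl_mono:
  assumes "R \<subseteq> S\<^sup>+"
  shows "(R \<union> R\<inverse>)\<^sup>* \<subseteq> (S \<union> S\<inverse>)\<^sup>*"
proof -
  have "S\<^sup>+ \<subseteq> (S \<union> S\<inverse>)\<^sup>*" "(S\<^sup>+)\<inverse> \<subseteq> (S \<union> S\<inverse>)\<^sup>*"
    by (auto simp flip: trancl_converse intro: rtrancl_mono[THEN subsetD] trancl_into_rtrancl)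
  with assms have "R \<union> R\<inverse> \<subseteq> (S \<union> S\<inverse>)\<^sup>*" by blast
  then show ?thesis using rtrancl_subset_rtrancl by blast
qed

lemma st_solution_of_transitive_closure:
  assumes A: "A \<subseteq> V \<times> V" and sol: "st_solution V (transitive_closure_arcs A) F B W"
  shows "\<exists>W'. st_solution V A F B W'"
proof -
  define k where "k = kB V B"
  have "\<forall>i. \<exists>w'. i < k \<longrightarrow> is_walk V A w' \<and> hd w' = hd (W i) \<and> set (W i) \<subseteq> set w' \<and>
      set (walk_arcs (W i)) \<subseteq> (set (walk_arcs w'))\<^sup>+"
    using expand_transitive_closure_walk[OF A] sol unfolding st_solution_def k_def by blast
  then obtain W' where W': "\<And>i. i < k \<Longrightarrow> is_walk V A (W' i) \<and> hd (W' i) = hd (W i) \<and>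
      set (W i) \<subseteq> set (W' i) \<and> set (walk_arcs (W i)) \<subseteq> (set (walk_arcs (W' i)))\<^sup>+"
    by metis
  have "fam_arcs k W \<subseteq> (fam_arcs k W')\<^sup>+"
  proof
    fix a assume "a \<in> fam_arcs k W"
    then obtain i where i: "i < k" "a \<in> set (walk_arcs (W i))" unfolding fam_arcs_def by blast
    with W' have "a \<in> (set (walk_arcs (W' i)))\<^sup>+" by blast
    then show "a \<in> (fam_arcs k W')\<^sup>+"
      by (rule trancl_mono) (use i(1) in \<open>auto simp: fam_arcs_def\<close>)
  qed
  then have "(fam_arcs k W \<union> (fam_arcs k W)\<inverse>)\<^sup>* \<subseteq> (fam_arcs k W' \<union> (fam_arcs k W')\<inverse>)\<^sup>*"
    by (rule symmetric_rtrancl_mono)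
  moreover have "{i. i < k \<and> hd (W' i) = v} = {i. i < k \<and> hd (W i) = v}" for v
    using W' by auto
  moreover have "fam_verts k W \<subseteq> fam_verts k W'" using W' unfolding fam_verts_def by blast
  moreover have "\<forall>i<k. is_walk V A (W' i)" using W' by blast
  ultimately have "st_solution V A F B W'"
    using sol unfolding st_solution_def k_def[symmetric] by (intro conjI) (simp, simp, blast, blast)
  then show ?thesis by blast
qed

section \<open>Rooted trees\<close>

text \<open>Rather than acyclicity itself, a rank function under which every edge joins a vertex to a
  parent of smaller rank is carried along: unlike acyclicity, it is easily extended when a leaf is
  added or an edge is subdivided.\<close>

definition rooted_tree :: "'a set \<Rightarrow> 'a set set \<Rightarrow> bool" where
  "rooted_tree X E \<longleftrightarrow> (\<forall>e\<in>E. e \<subseteq> X) \<and> ug_connected X E \<and>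
     (\<exists>parent (rank :: 'a \<Rightarrow> real). \<forall>e\<in>E. \<exists>c. e = {c, parent c} \<and> rank (parent c) < rank c)"

lemma ranked_edge_parent:
  assumes ranked: "\<forall>e\<in>E. \<exists>c. e = {c, parent c} \<and> (rank :: 'a \<Rightarrow> real) (parent c) < rank c"
    and "{x, a} \<in> E" "x \<noteq> a" "rank a \<le> rank x"
  shows "parent x = a"
proof -
  obtain c where c: "{x, a} = {c, parent c}" "rank (parent c) < rank c" using ranked assms(2) by blast
  then have "(x = c \<and> a = parent c) \<or> (x = parent c \<and> a = c)" by (auto simp: doubleton_eq_iff)
  with c(2) assms(4) show ?thesis by auto
qed

text \<open>On a cycle, a vertex of maximal rank would have both of its cycle neighbours as parent.\<close>

lemma ug_acyclic_if_ranked: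
  assumes ranked: "\<forall>e\<in>E. \<exists>c. e = {c, parent c} \<and> (rank :: 'a \<Rightarrow> real) (parent c) < rank c"
  shows "ug_acyclic E"
  unfolding ug_acyclic_def
proof
  assume "\<exists>cs. ug_cycle E cs"
  then obtain cs where cycle: "ug_cycle E cs" by blast
  define n where "n = length cs"
  have n3: "n \<ge> 3" and dist: "distinct cs"
    and edge: "\<And>i. i < n \<Longrightarrow> {cs ! i, cs ! ((i + 1) mod n)} \<in> E"
    using cycle unfolding ug_cycle_def n_def by auto
  have "finite (rank ` set cs)" "rank ` set cs \<noteq> {}" using n3 n_def by auto
  then obtain m where m: "m < n" "rank (cs ! m) = Max (rank ` set cs)"
    by (metis Max_in imageE in_set_conv_nth n_def)
  have top: "\<And>i. i < n \<Longrightarrow> rank (cs ! i) \<le> rank (cs ! m)"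
    using m(2) \<open>finite (rank ` set cs)\<close> by (simp add: n_def)
  define succ where "succ = (if m + 1 < n then m + 1 else 0)"
  define pred where "pred = (if m = 0 then n - 1 else m - 1)"
  have succ_pred: "succ < n" "pred < n" "succ \<noteq> m" "pred \<noteq> m" "succ \<noteq> pred"
    using m n3 unfolding succ_def pred_def by auto
  have "(m + 1) mod n = succ"
    using m(1) unfolding succ_def by (metis Suc_eq_plus1 Suc_lessI mod_less mod_self)
  moreover have "(pred + 1) mod n = m"
    using m n3 unfolding pred_def by auto
  ultimately have "{cs ! m, cs ! succ} \<in> E" "{cs ! m, cs ! pred} \<in> E"
    using edge[OF m(1)] edge[OF succ_pred(2)] by (simp_all add: insert_commute)
  moreover have "cs ! m \<noteq> cs ! succ" "cs ! m \<noteq> cs ! pred" "cs ! succ \<noteq> cs ! pred"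
    using succ_pred m(1) dist by (simp_all add: nth_eq_iff_index_eq n_def)
  ultimately have "parent (cs ! m) = cs ! succ" "parent (cs ! m) = cs ! pred"
    using ranked_edge_parent[OF ranked] top succ_pred by blast+
  with \<open>cs ! succ \<noteq> cs ! pred\<close> show False by simp
qed

lemma rooted_tree_acyclic: "rooted_tree X E \<Longrightarrow> ug_acyclic E"
  unfolding rooted_tree_def using ug_acyclic_if_ranked by blast

lemma rooted_tree_empty_iff: "rooted_tree {} E \<longleftrightarrow> E = {}"
  unfolding rooted_tree_def ug_connected_def by fastforce

lemma rooted_tree_singleton: "rooted_tree {x} {}"
  unfolding rooted_tree_def ug_connected_def by auto

lemma ug_connected_extend:
  assumes "ug_connected X E" "ug_adj E \<subseteq> (ug_adj E')\<^sup>*" "{x, y} \<in> E'" "x \<in> X"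
  shows "ug_connected (insert y X) E'"
proof -
  have old: "(a, b) \<in> (ug_adj E')\<^sup>*" if "a \<in> X" "b \<in> X" for a b
    using assms(1,2) that rtrancl_subset_rtrancl unfolding ug_connected_def by blast
  have "(x, y) \<in> ug_adj E'" "(y, x) \<in> ug_adj E'"
    using assms(3) unfolding ug_adj_def by (simp_all add: insert_commute)
  then have "(y, a) \<in> (ug_adj E')\<^sup>*" "(a, y) \<in> (ug_adj E')\<^sup>*" if "a \<in> X" for a
    using old[OF assms(4) that] old[OF that assms(4)]
    by (auto intro: converse_rtrancl_into_rtrancl rtrancl_into_rtrancl)
  with old show ?thesis unfolding ug_connected_def by blast
qed

lemma rooted_tree_add_leaf:
  assumes tree: "rooted_tree X E" and "x \<in> X" "y \<notin> X"
  shows "rooted_tree (insert y X) (insert {x, y} E)"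
proof -
  obtain parent and rank :: "'a \<Rightarrow> real" where
    ranked: "\<forall>e\<in>E. \<exists>c. e = {c, parent c} \<and> rank (parent c) < rank c"
    using tree unfolding rooted_tree_def by blast
  have in_X: "\<forall>e\<in>E. e \<subseteq> X" using tree unfolding rooted_tree_def by blast
  have "ug_connected (insert y X) (insert {x, y} E)"
    using tree assms(2) by (intro ug_connected_extend) (auto simp: rooted_tree_def ug_adj_def)
  moreover have "\<forall>e\<in>insert {x, y} E. \<exists>c. e = {c, (parent(y := x)) c} \<and>
      (rank(y := rank x + 1)) ((parent(y := x)) c) < (rank(y := rank x + 1)) c"
  proof
    fix e assume "e \<in> insert {x, y} E"
    then show "\<exists>c. e = {c, (parent(y := x)) c} \<and>
      (rank(y := rank x + 1)) ((parent(y := x)) c) < (rank(y := rank x + 1)) c"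
    proof
      assume "e = {x, y}"
      then show ?thesis using assms(2,3) by (intro exI[of _ y]) (auto simp: insert_commute)
    next
      assume "e \<in> E"
      with ranked obtain c where "e = {c, parent c}" "rank (parent c) < rank c" by blast
      moreover have "c \<noteq> y" "parent c \<noteq> y" using in_X \<open>e \<in> E\<close> assms(3) calculation(1) by auto
      ultimately show ?thesis by (intro exI[of _ c]) auto
    qed
  qed
  ultimately show ?thesis using in_X assms(2) unfolding rooted_tree_def by blast
qed

lemma ug_adj_subdivide:
  "ug_adj E \<subseteq> (ug_adj (insert {u, y} (insert {y, v} (E - {{u, v}}))))\<^sup>*" (is "_ \<subseteq> (ug_adj ?E)\<^sup>*")
proof
  fix p assume "p \<in> ug_adj E"
  then obtain a b where p: "p = (a, b)" "{a, b} \<in> E" unfolding ug_adj_def by auto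
  show "p \<in> (ug_adj ?E)\<^sup>*"
  proof (cases "{a, b} = {u, v}")
    case True
    have "(u, y) \<in> ug_adj ?E" "(y, u) \<in> ug_adj ?E" "(v, y) \<in> ug_adj ?E" "(y, v) \<in> ug_adj ?E"
      unfolding ug_adj_def by (auto simp: insert_commute)
    with True p show ?thesis by (auto simp: doubleton_eq_iff intro: rtrancl_into_rtrancl)
  next
    case False
    with p show ?thesis unfolding ug_adj_def by auto
  qed
qed

lemma rooted_tree_subdivide:
  assumes tree: "rooted_tree X E" and uv: "{u, v} \<in> E" and y: "y \<notin> X"
  shows "rooted_tree (insert y X) (insert {u, y} (insert {y, v} (E - {{u, v}})))"
    (is "rooted_tree _ ?E")
proof -
  obtain parent and rank :: "'a \<Rightarrow> real" where
    ranked: "\<forall>e\<in>E. \<exists>c. e = {c, parent c} \<and> rank (parent c) < rank c"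
    using tree unfolding rooted_tree_def by blast
  have in_X: "\<forall>e\<in>E. e \<subseteq> X" using tree unfolding rooted_tree_def by blast
  have "u \<in> X" "v \<in> X" using in_X uv by auto
  have conn: "ug_connected (insert y X) ?E"
    using tree \<open>u \<in> X\<close> ug_adj_subdivide[of E u y v]
    by (intro ug_connected_extend) (auto simp: rooted_tree_def)
  obtain c where c: "{u, v} = {c, parent c}" "rank (parent c) < rank c"
    using ranked uv by blast
  define p where "p = parent c"
  have "c \<in> X" "p \<in> X" "c \<noteq> y" "p \<noteq> y" using c in_X uv y p_def by auto
  define parent' where "parent' = parent(c := y, y := p)"
  define rank' where "rank' = rank(y := (rank p + rank c) / 2)"
  have "\<forall>e\<in>?E. \<exists>c. e = {c, parent' c} \<and> rank' (parent' c) < rank' c"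
  proof
    fix e assume "e \<in> ?E"
    then consider "e = {c, y}" | "e = {y, p}" | "e \<in> E" "e \<noteq> {c, p}"
      using c(1) unfolding p_def by (auto simp: doubleton_eq_iff)
    then show "\<exists>c. e = {c, parent' c} \<and> rank' (parent' c) < rank' c"
    proof cases
      case 1
      with \<open>c \<noteq> y\<close> \<open>p \<noteq> y\<close> c(2) show ?thesis
        unfolding parent'_def rank'_def p_def by (intro exI[of _ c]) auto
    next
      case 2
      with \<open>c \<noteq> y\<close> \<open>p \<noteq> y\<close> c(2) show ?thesis
        unfolding parent'_def rank'_def p_def by (intro exI[of _ y]) (auto simp: insert_commute)
    next
      case 3
      with ranked obtain d where d: "e = {d, parent d}" "rank (parent d) < rank d" by blast
      with 3 in_X y have "d \<noteq> y" "parent d \<noteq> y" "d \<noteq> c" unfolding p_def by auto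
      with d show ?thesis unfolding parent'_def rank'_def by (intro exI[of _ d]) auto
    qed
  qed
  with conn in_X \<open>u \<in> X\<close> \<open>v \<in> X\<close> show ?thesis unfolding rooted_tree_def by blast
qed

lemma rooted_tree_insert_path_vertex:
  assumes tree: "rooted_tree X (E \<union> path_edges (as @ bs))"
    and disj: "path_edges (as @ bs) \<inter> E = {}"
    and "distinct (as @ bs)" "set as \<subseteq> X" "as \<noteq> []" "z \<notin> X"
  shows "rooted_tree (insert z X) (E \<union> path_edges (as @ z # bs)) \<and>
    path_edges (as @ z # bs) \<subseteq> path_edges (as @ bs) \<union> {e. z \<in> e}"
proof (cases "bs = []")
  case True
  have "last as \<in> X" using \<open>as \<noteq> []\<close> \<open>set as \<subseteq> X\<close> by auto
  moreover have "path_edges (as @ z # bs) = insert {last as, z} (path_edges (as @ bs))"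
    using path_edges_insert_last[OF \<open>as \<noteq> []\<close>] True by simp
  ultimately show ?thesis using rooted_tree_add_leaf[OF tree _ \<open>z \<notin> X\<close>] by auto
next
  case False
  define u v where "u = last as" and "v = hd bs"
  have new: "path_edges (as @ z # bs) = insert {u, z} (insert {z, v} (path_edges (as @ bs) - {{u, v}}))"
    using path_edges_insert_inner[OF \<open>as \<noteq> []\<close> False \<open>distinct (as @ bs)\<close>]
    unfolding u_def v_def .
  have "{u, v} \<in> path_edges (as @ bs)"
    unfolding path_edges_def u_def v_def using walk_arcs_append[OF \<open>as \<noteq> []\<close> False] by auto
  with disj have "E \<union> path_edges (as @ z # bs) =
      insert {u, z} (insert {z, v} ((E \<union> path_edges (as @ bs)) - {{u, v}}))"
    unfolding new by auto
  with rooted_tree_subdivide[OF tree _ \<open>z \<notin> X\<close>] \<open>{u, v} \<in> path_edges (as @ bs)\<close> new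
  show ?thesis by auto
qed

section \<open>Growing a tree inside a family of walks\<close>

lemma card_bound_Un_facilities:
  assumes "finite X" "finite N" "N \<subseteq> F" "card X + 1 \<le> 2 * card (F \<inter> X)"
  shows "card (X \<union> N) + 1 \<le> 2 * card (F \<inter> (X \<union> N))"
proof -
  have "X \<union> N = X \<union> (N - X)" "F \<inter> (X \<union> N) = (F \<inter> X) \<union> (N - X)" using assms(3) by auto
  moreover have "card (X \<union> (N - X)) = card X + card (N - X)"
    "card ((F \<inter> X) \<union> (N - X)) = card (F \<inter> X) + card (N - X)"
    using assms(1,2) by (intro card_Un_disjoint; auto)+
  ultimately show ?thesis using assms(4) by simp
qed

locale walk_family =
  fixes W :: "nat \<Rightarrow> 'a list" and k :: nat and F :: "'a set"
  assumes walk_nonempty: "i < k \<Longrightarrow> W i \<noteq> []"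
    and walk_hd_facility: "i < k \<Longrightarrow> hd (W i) \<in> F"
    and walks_overlap: "I \<subseteq> {..<k} \<Longrightarrow> I \<noteq> {} \<Longrightarrow> I \<noteq> {..<k} \<Longrightarrow>
      \<exists>j<k. j \<notin> I \<and> (\<exists>i\<in>I. set (W j) \<inter> set (W i) \<noteq> {})"
begin

definition subwalk :: "(nat \<Rightarrow> nat set) \<Rightarrow> nat \<Rightarrow> 'a list" where
  "subwalk P i = nths (W i) (P i)"

definition verts :: "(nat \<Rightarrow> nat set) \<Rightarrow> 'a set" where
  "verts P = (\<Union>i<k. set (subwalk P i))"

definition edges :: "(nat \<Rightarrow> nat set) \<Rightarrow> 'a set set" where
  "edges P = (\<Union>i<k. path_edges (subwalk P i))"

definition skeleton :: "nat set \<Rightarrow> (nat \<Rightarrow> nat set) \<Rightarrow> bool" where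
  "skeleton I P \<longleftrightarrow> I \<subseteq> {..<k} \<and> (\<forall>i<k. i \<notin> I \<longrightarrow> P i = {}) \<and>
     (\<forall>i\<in>I. 0 \<in> P i \<and> distinct (subwalk P i)) \<and>
     (\<forall>i<k. \<forall>j<k. i \<noteq> j \<longrightarrow> path_edges (subwalk P i) \<inter> path_edges (subwalk P j) = {}) \<and>
     rooted_tree (verts P) (edges P)"

lemma subwalk_fun_upd [simp]: "subwalk (P(i := Q)) l = (if l = i then nths (W i) Q else subwalk P l)"
  by (simp add: subwalk_def)

lemma finite_verts: "finite (verts P)"
  by (simp add: verts_def)

lemma set_subwalk_subset_verts: "i < k \<Longrightarrow> set (subwalk P i) \<subseteq> verts P"
  by (auto simp: verts_def)

lemma verts_fun_upd:
  "i < k \<Longrightarrow> verts (P(i := Q)) = (\<Union>l\<in>{..<k}-{i}. set (subwalk P l)) \<union> set (nths (W i) Q)"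
  unfolding verts_def by (auto split: if_splits)

lemma edges_fun_upd:
  "i < k \<Longrightarrow> edges (P(i := Q)) = (\<Union>l\<in>{..<k}-{i}. path_edges (subwalk P l)) \<union> path_edges (nths (W i) Q)"
  unfolding edges_def by (auto split: if_splits)

lemma skeleton_fun_upd:
  assumes sk: "skeleton I P" and "i < k" "0 \<in> Q" "distinct (nths (W i) Q)"
    and disj: "\<And>l. l < k \<Longrightarrow> l \<noteq> i \<Longrightarrow> path_edges (nths (W i) Q) \<inter> path_edges (subwalk P l) = {}"
    and "rooted_tree (verts (P(i := Q))) (edges (P(i := Q)))"
  shows "skeleton (insert i I) (P(i := Q))"
  using assms unfolding skeleton_def by (auto simp: Int_commute)

lemma skeleton_disjoint:
  "skeleton I P \<Longrightarrow> i < k \<Longrightarrow> l < k \<Longrightarrow> i \<noteq> l \<Longrightarrow>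
   path_edges (subwalk P i) \<inter> path_edges (subwalk P l) = {}"
  unfolding skeleton_def by blast

lemma skeleton_no_walks: "skeleton {} P \<Longrightarrow> verts P = {}"
  unfolding skeleton_def verts_def subwalk_def by auto

lemma skeleton_disjoint_new_vertex:
  assumes sk: "skeleton I P" and "i < k" "l < k" "l \<noteq> i" and "z \<notin> verts P"
    and new_edges: "path_edges t \<subseteq> path_edges (subwalk P i) \<union> {e. z \<in> e}"
  shows "path_edges t \<inter> path_edges (subwalk P l) = {}"
proof -
  have "path_edges (subwalk P i) \<inter> path_edges (subwalk P l) = {}"
    using skeleton_disjoint[OF sk \<open>i < k\<close> \<open>l < k\<close> not_sym[OF \<open>l \<noteq> i\<close>]] .
  moreover have "z \<notin> e" if "e \<in> path_edges (subwalk P l)" for e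
    using path_edges_subset[OF that] set_subwalk_subset_verts[OF \<open>l < k\<close>] \<open>z \<notin> verts P\<close> by blast
  ultimately show ?thesis using new_edges by blast
qed

lemma skeleton_insert_vertex:
  assumes sk: "skeleton I P" and i: "i \<in> I" and p: "p < length (W i)" and new: "W i ! p \<notin> verts P"
  shows "skeleton I (P(i := insert p (P i))) \<and> verts (P(i := insert p (P i))) = insert (W i ! p) (verts P)"
proof -
  define z where "z = W i ! p"
  define t' where "t' = nths (W i) (insert p (P i))"
  define others_verts where "others_verts = (\<Union>l\<in>{..<k}-{i}. set (subwalk P l))"
  define others_edges where "others_edges = (\<Union>l\<in>{..<k}-{i}. path_edges (subwalk P l))"
  have "i < k" "0 \<in> P i" "distinct (subwalk P i)" and tree: "rooted_tree (verts P) (edges P)"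
    using sk i unfolding skeleton_def by auto
  have verts_P: "verts P = others_verts \<union> set (subwalk P i)"
    and edges_P: "edges P = others_edges \<union> path_edges (subwalk P i)"
    using verts_fun_upd[OF \<open>i < k\<close>, of P "P i"] edges_fun_upd[OF \<open>i < k\<close>, of P "P i"]
    unfolding others_verts_def others_edges_def by (simp_all add: subwalk_def)
  have "z \<notin> verts P" using new unfolding z_def .
  then have "z \<notin> set (subwalk P i)" using set_subwalk_subset_verts[OF \<open>i < k\<close>] by blast
  then have "p \<notin> P i" using p unfolding z_def subwalk_def set_nths by auto
  then have "p \<noteq> 0" using \<open>0 \<in> P i\<close> by (intro notI) simp
  define as where "as = nths (W i) {q\<in>P i. q < p}"
  define bs where "bs = nths (W i) {q\<in>P i. p < q}"
  have split: "subwalk P i = as @ bs" "t' = as @ z # bs"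
    using nths_insert[OF p \<open>p \<notin> P i\<close>] unfolding subwalk_def t'_def as_def bs_def z_def by simp_all
  have "as \<noteq> []" unfolding as_def
    using nths_hd[of "{q\<in>P i. q < p}" "W i"] \<open>0 \<in> P i\<close> \<open>p \<noteq> 0\<close> walk_nonempty[OF \<open>i < k\<close>] by simp
  have "distinct t'" using \<open>distinct (subwalk P i)\<close> \<open>z \<notin> set (subwalk P i)\<close> unfolding split by auto
  have "path_edges (subwalk P i) \<inter> others_edges = {}"
    using skeleton_disjoint[OF sk \<open>i < k\<close>] unfolding others_edges_def by blast
  then have tree': "rooted_tree (insert z (verts P)) (others_edges \<union> path_edges t')"
    and new_edges: "path_edges t' \<subseteq> path_edges (subwalk P i) \<union> {e. z \<in> e}"
    using rooted_tree_insert_path_vertex[of "verts P" others_edges as bs z] tree \<open>z \<notin> verts P\<close>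
      \<open>as \<noteq> []\<close> \<open>distinct (subwalk P i)\<close> verts_P edges_P unfolding split by auto
  have "path_edges t' \<inter> path_edges (subwalk P l) = {}" if "l < k" "l \<noteq> i" for l
    using skeleton_disjoint_new_vertex[OF sk \<open>i < k\<close> that \<open>z \<notin> verts P\<close> new_edges] .
  moreover have "verts (P(i := insert p (P i))) = insert z (verts P)"
    unfolding verts_fun_upd[OF \<open>i < k\<close>] verts_P t'_def[symmetric] others_verts_def split by auto
  moreover have "edges (P(i := insert p (P i))) = others_edges \<union> path_edges t'"
    unfolding edges_fun_upd[OF \<open>i < k\<close>] others_edges_def t'_def ..
  ultimately have "skeleton (insert i I) (P(i := insert p (P i)))"
    using skeleton_fun_upd[OF sk \<open>i < k\<close> _ \<open>distinct t'\<close>[unfolded t'_def]] tree' \<open>0 \<in> P i\<close>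
    unfolding t'_def by simp
  then show ?thesis using i \<open>verts (P(i := insert p (P i))) = insert z (verts P)\<close>
    unfolding z_def by (simp add: insert_absorb)
qed

lemma skeleton_add_walk:
  assumes sk: "skeleton I P" and "j < k" "j \<notin> I" "0 \<in> Q" and t: "t = nths (W j) Q"
    and "distinct t" "path_edges t \<inter> edges P = {}"
    and "rooted_tree (verts P \<union> set t) (edges P \<union> path_edges t)"
  shows "skeleton (insert j I) (P(j := Q)) \<and> verts (P(j := Q)) = verts P \<union> set t"
proof -
  have "subwalk P j = []" using sk \<open>j < k\<close> \<open>j \<notin> I\<close> unfolding skeleton_def subwalk_def by simp
  then have "verts (P(j := Q)) = verts P \<union> set t" "edges (P(j := Q)) = edges P \<union> path_edges t"
    using verts_fun_upd[OF \<open>j < k\<close>, of P] verts_fun_upd[OF \<open>j < k\<close>, of P "P j"]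
      edges_fun_upd[OF \<open>j < k\<close>, of P] edges_fun_upd[OF \<open>j < k\<close>, of P "P j"]
    unfolding t by (simp_all add: subwalk_def)
  moreover have "path_edges t \<inter> path_edges (subwalk P l) = {}" if "l < k" for l
    using assms(7) that unfolding edges_def by blast
  ultimately show ?thesis
    using skeleton_fun_upd[OF sk \<open>j < k\<close> \<open>0 \<in> Q\<close>] assms(6,8) unfolding t by simp
qed

lemma skeleton_start_walk:
  assumes sk: "skeleton I P" and "j < k" "j \<notin> I" and head: "hd (W j) \<in> verts P \<or> verts P = {}"
  shows "skeleton (insert j I) (P(j := {0})) \<and> verts (P(j := {0})) = insert (hd (W j)) (verts P)"
proof -
  have "nths (W j) {0} = [hd (W j)]"
    using walk_nonempty[OF \<open>j < k\<close>] by (simp add: nths_singleton_nth hd_conv_nth)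
  moreover have "rooted_tree (insert (hd (W j)) (verts P)) (edges P)"
    using sk head rooted_tree_empty_iff rooted_tree_singleton unfolding skeleton_def
    by (metis insert_absorb)
  ultimately show ?thesis
    using skeleton_add_walk[OF sk \<open>j < k\<close> \<open>j \<notin> I\<close>, of "{0}" "[hd (W j)]"] by simp
qed

lemma skeleton_start_walk_with_leaf:
  assumes sk: "skeleton I P" and "j < k" "j \<notin> I" and q: "q < length (W j)" "W j ! q \<in> verts P"
    and head: "hd (W j) \<notin> verts P"
  shows "skeleton (insert j I) (P(j := {0, q})) \<and> verts (P(j := {0, q})) = insert (hd (W j)) (verts P)"
proof -
  define h z where "h = hd (W j)" and "z = W j ! q"
  have "W j \<noteq> []" using walk_nonempty[OF \<open>j < k\<close>] .
  then have "h \<noteq> z" using q head unfolding h_def z_def by auto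
  then have "q \<noteq> 0" using \<open>W j \<noteq> []\<close> unfolding h_def z_def by (metis hd_conv_nth)
  obtain xs where "W j = h # xs" using \<open>W j \<noteq> []\<close> unfolding h_def by (cases "W j") auto
  moreover have "{i. Suc i \<in> {0, q}} = {q - 1}" using \<open>q \<noteq> 0\<close> by auto
  ultimately have t: "nths (W j) {0, q} = [h, z]"
    using q(1) \<open>q \<noteq> 0\<close> unfolding z_def by (simp add: nths_Cons_zero nths_singleton_nth)
  have tree: "rooted_tree (verts P) (edges P)" using sk unfolding skeleton_def by blast
  then have "rooted_tree (insert h (verts P)) (insert {h, z} (edges P))"
    using rooted_tree_add_leaf[OF tree q(2)] head unfolding h_def z_def by (simp add: insert_commute)
  moreover have "{h, z} \<notin> edges P"
    using tree head unfolding rooted_tree_def h_def by blast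
  ultimately show ?thesis
    using skeleton_add_walk[OF sk \<open>j < k\<close> \<open>j \<notin> I\<close>, of "{0, q}" "[h, z]"] t \<open>h \<noteq> z\<close>
      insert_absorb[OF q(2)] unfolding h_def z_def by (simp add: insert_commute)
qed

lemma skeleton_absorb_facilities:
  assumes "skeleton I P" "i \<in> I"
  shows "\<exists>P'. skeleton I P' \<and> verts P' = verts P \<union> (F \<inter> set (W i))"
  using assms
proof (induction "card (F \<inter> set (W i) - verts P)" arbitrary: P rule: less_induct)
  case less
  show ?case
  proof (cases "F \<inter> set (W i) \<subseteq> verts P")
    case True
    with less.prems show ?thesis by (intro exI[of _ P]) blast
  next
    case False
    then obtain x where "x \<in> F" "x \<in> set (W i)" "x \<notin> verts P" by blast
    then obtain p where p: "p < length (W i)" "W i ! p \<in> F" "W i ! p \<notin> verts P"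
      by (auto simp: in_set_conv_nth)
    define P1 where "P1 = P(i := insert p (P i))"
    have P1: "skeleton I P1" "verts P1 = insert (W i ! p) (verts P)"
      using skeleton_insert_vertex[OF less.prems p(1,3)] unfolding P1_def by auto
    have "F \<inter> set (W i) - verts P1 \<subset> F \<inter> set (W i) - verts P"
      using P1(2) p by auto
    then have "card (F \<inter> set (W i) - verts P1) < card (F \<inter> set (W i) - verts P)"
      by (intro psubset_card_mono) auto
    then obtain P' where "skeleton I P'" "verts P' = verts P1 \<union> (F \<inter> set (W i))"
      using less.hyps[OF _ P1(1) less.prems(2)] by blast
    with P1(2) p show ?thesis by (intro exI[of _ P']) auto
  qed
qed

definition saturated_skeleton :: "nat set \<Rightarrow> (nat \<Rightarrow> nat set) \<Rightarrow> bool" where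
  "saturated_skeleton I P \<longleftrightarrow> skeleton I P \<and> (\<forall>i\<in>I. F \<inter> set (W i) \<subseteq> verts P) \<and>
     (I \<noteq> {} \<longrightarrow> card (verts P) + 1 \<le> 2 * card (F \<inter> verts P))"

lemma skeleton_attach_at_head:
  assumes sat: "saturated_skeleton I P" and "j < k" "j \<notin> I"
    and head: "I = {} \<or> hd (W j) \<in> verts P"
  shows "\<exists>P'. skeleton (insert j I) P' \<and> verts P' = insert (hd (W j)) (verts P) \<and>
    card (verts P') + 1 \<le> 2 * card (F \<inter> verts P')"
proof -
  have sk: "skeleton I P" using sat unfolding saturated_skeleton_def by blast
  then have "hd (W j) \<in> verts P \<or> verts P = {}" using head skeleton_no_walks[of P] by blast
  then have start: "skeleton (insert j I) (P(j := {0}))"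
    "verts (P(j := {0})) = insert (hd (W j)) (verts P)"
    using skeleton_start_walk[OF sk \<open>j < k\<close> \<open>j \<notin> I\<close>] by auto
  have "card (verts (P(j := {0}))) + 1 \<le> 2 * card (F \<inter> verts (P(j := {0})))"
  proof (cases "I = {}")
    case True
    then show ?thesis
      using start(2) skeleton_no_walks[of P] sk walk_hd_facility[OF \<open>j < k\<close>] by simp
  next
    case False
    with head have "insert (hd (W j)) (verts P) = verts P" by auto
    with False sat show ?thesis using start(2) unfolding saturated_skeleton_def by simp
  qed
  with start show ?thesis by blast
qed

lemma skeleton_attach_via_overlap:
  assumes sat: "saturated_skeleton I P" and "j < k" "j \<notin> I"
    and head: "hd (W j) \<notin> verts P" and i: "i \<in> I" and z: "z \<in> set (W j)" "z \<in> set (W i)"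
  shows "\<exists>P'. skeleton (insert j I) P' \<and> verts P' = insert (hd (W j)) (insert z (verts P)) \<and>
    card (verts P') + 1 \<le> 2 * card (F \<inter> verts P')"
proof -
  have sk: "skeleton I P" and cover: "F \<inter> set (W i) \<subseteq> verts P"
    and bound: "card (verts P) + 1 \<le> 2 * card (F \<inter> verts P)"
    using sat i unfolding saturated_skeleton_def by auto
  obtain P0 where P0: "skeleton I P0" "verts P0 = insert z (verts P)"
  proof (cases "z \<in> verts P")
    case True
    with sk show ?thesis by (intro that[of P]) (simp_all add: insert_absorb)
  next
    case False
    then obtain p where "p < length (W i)" "W i ! p = z" "W i ! p \<notin> verts P"
      using z(2) by (auto simp: in_set_conv_nth)
    with skeleton_insert_vertex[OF sk i] show ?thesis using that by blast
  qed
  obtain q where q: "q < length (W j)" "W j ! q = z" using z(1) by (auto simp: in_set_conv_nth)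
  have "hd (W j) \<in> F" using walk_hd_facility[OF \<open>j < k\<close>] .
  then have "hd (W j) \<noteq> z" using head cover z(2) by blast
  then obtain P' where P': "skeleton (insert j I) P'" "verts P' = insert (hd (W j)) (verts P0)"
    using skeleton_start_walk_with_leaf[OF P0(1) \<open>j < k\<close> \<open>j \<notin> I\<close> q(1)] q(2) head P0(2) by auto
  \<comment> \<open>z is either old or not a facility, so one new vertex besides the facility hd (W j) is added\<close>
  have "F \<inter> verts P' = insert (hd (W j)) (F \<inter> verts P)"
    using P'(2) P0(2) cover z(2) \<open>hd (W j) \<in> F\<close> by auto
  moreover have "card (verts P') \<le> card (verts P) + 2"
    using P'(2) P0(2) finite_verts[of P] by (simp add: card_insert_if)
  ultimately have "card (verts P') + 1 \<le> 2 * card (F \<inter> verts P')"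
    using bound head finite_verts[of P] by simp
  with P' P0(2) show ?thesis by blast
qed

lemma saturated_skeleton_insert:
  assumes sat: "saturated_skeleton I P" and "j < k" "j \<notin> I"
    and overlap: "I \<noteq> {} \<Longrightarrow> \<exists>i\<in>I. set (W j) \<inter> set (W i) \<noteq> {}"
  shows "\<exists>P'. saturated_skeleton (insert j I) P'"
proof -
  have sk: "skeleton I P" and cover: "\<forall>i\<in>I. F \<inter> set (W i) \<subseteq> verts P"
    using sat unfolding saturated_skeleton_def by auto
  obtain P1 where P1: "skeleton (insert j I) P1" "verts P \<subseteq> verts P1"
    "card (verts P1) + 1 \<le> 2 * card (F \<inter> verts P1)"
  proof (cases "I = {} \<or> hd (W j) \<in> verts P")
    case True
    from skeleton_attach_at_head[OF sat \<open>j < k\<close> \<open>j \<notin> I\<close> this] obtain P1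
      where "skeleton (insert j I) P1" "verts P1 = insert (hd (W j)) (verts P)"
        "card (verts P1) + 1 \<le> 2 * card (F \<inter> verts P1)"
      by blast
    then show ?thesis by (intro that) auto
  next
    case False
    then obtain i z where "i \<in> I" "z \<in> set (W j)" "z \<in> set (W i)" using overlap by blast
    from skeleton_attach_via_overlap[OF sat \<open>j < k\<close> \<open>j \<notin> I\<close> _ this] False obtain P1
      where "skeleton (insert j I) P1" "verts P1 = insert (hd (W j)) (insert z (verts P))"
        "card (verts P1) + 1 \<le> 2 * card (F \<inter> verts P1)"
      by blast
    then show ?thesis by (intro that) auto
  qed
  obtain P' where P': "skeleton (insert j I) P'" "verts P' = verts P1 \<union> (F \<inter> set (W j))"
    using skeleton_absorb_facilities[OF P1(1)] by blast
  have "card (verts P') + 1 \<le> 2 * card (F \<inter> verts P')"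
    unfolding P'(2) by (rule card_bound_Un_facilities) (use P1(3) finite_verts in auto)
  moreover have "\<forall>i\<in>insert j I. F \<inter> set (W i) \<subseteq> verts P'" using cover P1(2) P'(2) by auto
  ultimately show ?thesis using P'(1) unfolding saturated_skeleton_def by blast
qed

lemma saturated_skeleton_exists: "\<exists>P. saturated_skeleton {..<k} P"
proof -
  have "n \<le> k \<Longrightarrow> \<exists>I P. I \<subseteq> {..<k} \<and> card I = n \<and> saturated_skeleton I P" for n
  proof (induction n)
    case 0
    have "skeleton {} (\<lambda>_. {})"
      unfolding skeleton_def verts_def edges_def subwalk_def by (simp add: rooted_tree_empty_iff)
    then show ?case unfolding saturated_skeleton_def by (intro exI[of _ "{}"]) auto
  next
    case (Suc n)
    then obtain I P where IP: "I \<subseteq> {..<k}" "card I = n" "saturated_skeleton I P" by auto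
    then have "I \<noteq> {..<k}" using Suc.prems by auto
    obtain j where j: "j < k" "j \<notin> I" "I \<noteq> {} \<Longrightarrow> \<exists>i\<in>I. set (W j) \<inter> set (W i) \<noteq> {}"
    proof (cases "I = {}")
      case True
      with \<open>I \<noteq> {..<k}\<close> show ?thesis by (intro that[of 0]) auto
    next
      case False
      with walks_overlap[OF IP(1) False \<open>I \<noteq> {..<k}\<close>] that show ?thesis by blast
    qed
    then obtain P' where "saturated_skeleton (insert j I) P'"
      using saturated_skeleton_insert[OF IP(3)] by blast
    moreover have "card (insert j I) = Suc n"
      using IP(1,2) j(2) finite_subset[OF IP(1)] by simp
    moreover have "insert j I \<subseteq> {..<k}" using IP(1) j(1) by simp
    ultimately show ?case by blast
  qed
  from this[of k] obtain I P where I: "I \<subseteq> {..<k}" "card I = k" and sat: "saturated_skeleton I P"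
    by blast
  have "I = {..<k}" using card_subset_eq[OF finite_lessThan I(1)] I(2) by simp
  with sat show ?thesis by (intro exI[of _ P]) simp
qed

end

lemma distinct_concat_map_upt:
  "(\<And>i. i < k \<Longrightarrow> distinct (f i)) \<Longrightarrow>
   (\<And>i j. i < k \<Longrightarrow> j < k \<Longrightarrow> i \<noteq> j \<Longrightarrow> set (f i) \<inter> set (f j) = {}) \<Longrightarrow>
   distinct (concat (map f [0..<k]))"
proof (induction k)
  case (Suc k)
  have "distinct (concat (map f [0..<k]))" using Suc by simp
  moreover have "set (f k) \<inter> set (f i) = {}" if "i < k" for i using Suc.prems(2)[of k i] that by simp
  then have "set (f k) \<inter> set (concat (map f [0..<k])) = {}" by (simp add: disjoint_iff)
  ultimately show ?case using Suc.prems(1) by auto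
qed simp

lemma fam_arcs_neq:
  assumes "\<And>i. i < k \<Longrightarrow> distinct (W i)" "(u, v) \<in> fam_arcs k W"
  shows "u \<noteq> v"
proof -
  obtain i where "i < k" and arc: "(u, v) \<in> set (walk_arcs (W i))"
    using assms(2) unfolding fam_arcs_def by blast
  from assms(1)[OF \<open>i < k\<close>] arc show ?thesis by (rule distinct_walk_arcs_neq)
qed

lemma strongly_arc_distinct_if_disjoint_paths:
  assumes dist: "\<And>i. i < k \<Longrightarrow> distinct (W i)"
    and disj: "\<And>i j. i < k \<Longrightarrow> j < k \<Longrightarrow> i \<noteq> j \<Longrightarrow> path_edges (W i) \<inter> path_edges (W j) = {}"
  shows "strongly_arc_distinct k W"
proof -
  define L where "L = concat (map (\<lambda>i. walk_arcs (W i)) [0..<k])"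
  have "distinct (concat (map (\<lambda>i. map arc_edge (walk_arcs (W i))) [0..<k]))"
    using dist disj by (intro distinct_concat_map_upt) (auto simp: distinct_walk_arcs_edges path_edges_def)
  then have dist_edges: "distinct (map arc_edge L)" unfolding L_def by (simp add: map_concat comp_def)
  have "set L = fam_arcs k W" unfolding L_def fam_arcs_def by (simp add: atLeast0LessThan)
  then have neq: "u \<noteq> v" if "(u, v) \<in> set L" for u v using fam_arcs_neq[OF dist] that by simp
  have swap: "(u, v) = (v, u)" if "(u, v) \<in> set L" "(v, u) \<in> set L" for u v
  proof -
    have "arc_edge (u, v) = arc_edge (v, u)" by (simp add: insert_commute)
    with dist_edges that show ?thesis unfolding distinct_map inj_on_def by blast
  qed
  have "distinct L" using dist_edges by (simp add: distinct_map)
  moreover have "\<forall>(u, v)\<in>set L. (v, u) \<notin> set L" using neq swap by blast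
  ultimately show ?thesis unfolding strongly_arc_distinct_def Let_def L_def[symmetric] by blast
qed

lemma underlying_edges_eq_image:
  assumes "\<And>u v. (u, v) \<in> R \<Longrightarrow> u \<noteq> v"
  shows "underlying_edges R = arc_edge ` R"
proof (intro equalityI subsetI)
  fix e assume "e \<in> underlying_edges R"
  then obtain u v where "e = {u, v}" "(u, v) \<in> R" unfolding underlying_edges_def by blast
  then show "e \<in> arc_edge ` R" by (metis arc_edge_Pair image_eqI)
next
  fix e assume "e \<in> arc_edge ` R"
  then obtain u v where "e = {u, v}" "(u, v) \<in> R" by auto
  with assms show "e \<in> underlying_edges R" unfolding underlying_edges_def by blast
qed

lemma underlying_edges_fam_arcs:
  assumes "\<And>i. i < k \<Longrightarrow> distinct (W i)"
  shows "underlying_edges (fam_arcs k W) = (\<Union>i<k. path_edges (W i))"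
proof -
  have "underlying_edges (fam_arcs k W) = arc_edge ` fam_arcs k W"
    by (rule underlying_edges_eq_image) (rule fam_arcs_neq[OF assms])
  then show ?thesis unfolding fam_arcs_def path_edges_def by (simp add: image_UN)
qed

lemma ug_adj_underlying_edges: "ug_adj (underlying_edges R) \<subseteq> R \<union> R\<inverse>"
  unfolding ug_adj_def underlying_edges_def by (auto simp: doubleton_eq_iff)

lemma tree_like_solution_if_rooted_tree:
  assumes walks: "\<forall>i<kB V B. is_walk V A (W i)"
    and starts: "\<forall>v\<in>V. card {i. i < kB V B \<and> hd (W i) = v} = B v"
    and dist: "\<And>i. i < kB V B \<Longrightarrow> distinct (W i)"
    and disj: "\<And>i j. i < kB V B \<Longrightarrow> j < kB V B \<Longrightarrow> i \<noteq> j \<Longrightarrow> path_edges (W i) \<inter> path_edges (W j) = {}"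
    and tree: "rooted_tree (fam_verts (kB V B) W) (\<Union>i<kB V B. path_edges (W i))"
    and F: "F \<subseteq> fam_verts (kB V B) W"
  shows "tree_like_solution V A F B W"
proof -
  define R where "R = fam_arcs (kB V B) W"
  have tree': "rooted_tree (fam_verts (kB V B) W) (underlying_edges R)"
    using tree underlying_edges_fam_arcs[OF dist] unfolding R_def by simp
  have "(f, g) \<in> (ug_adj (underlying_edges R))\<^sup>*" if "f \<in> F" "g \<in> F" for f g
    using tree' F that unfolding rooted_tree_def ug_connected_def by blast
  then have "\<forall>f\<in>F. \<forall>g\<in>F. (f, g) \<in> (R \<union> R\<inverse>)\<^sup>*"
    using rtrancl_mono[OF ug_adj_underlying_edges] by blast
  then have "st_solution V A F B W"
    using walks starts F unfolding st_solution_def R_def by (intro conjI) simp_all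
  moreover have "strongly_arc_distinct (kB V B) W"
    using dist disj by (rule strongly_arc_distinct_if_disjoint_paths)
  moreover have "ug_acyclic (underlying_edges R)"
    using rooted_tree_acyclic[OF tree'] .
  moreover have "\<forall>e\<in>underlying_edges R. e \<subseteq> fam_verts (kB V B) W"
    "ug_connected (fam_verts (kB V B) W) (underlying_edges R)"
    using tree' unfolding rooted_tree_def by simp_all
  ultimately show ?thesis
    using F unfolding tree_like_solution_def R_def
    by (intro conjI exI[of _ "fam_verts (kB V B) W"] exI[of _ "underlying_edges (fam_arcs (kB V B) W)"])
      simp_all
qed

lemma solution_walks_overlap:
  assumes nonempty: "\<And>i. i < k \<Longrightarrow> W i \<noteq> []" and heads: "\<And>i. i < k \<Longrightarrow> hd (W i) \<in> F"
    and conn: "\<forall>f\<in>F. \<forall>g\<in>F. (f, g) \<in> (fam_arcs k W \<union> (fam_arcs k W)\<inverse>)\<^sup>*"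
    and I: "I \<subseteq> {..<k}" "I \<noteq> {}" "I \<noteq> {..<k}"
  shows "\<exists>j<k. j \<notin> I \<and> (\<exists>i\<in>I. set (W j) \<inter> set (W i) \<noteq> {})"
proof (rule ccontr)
  assume "\<not> ?thesis"
  then have apart: "set (W j) \<inter> set (W i) = {}" if "j < k" "j \<notin> I" "i \<in> I" for i j
    using that by blast
  define U where "U = (\<Union>i\<in>I. set (W i))"
  define R where "R = fam_arcs k W"
  obtain i0 j0 where "i0 \<in> I" "j0 < k" "j0 \<notin> I" using I by blast
  then have "i0 < k" using I(1) by blast
  \<comment> \<open>every arc lies on one walk, and the walks outside I avoid U, so U is closed under arcs\<close>
  have "y \<in> U" if "(hd (W i0), y) \<in> (R \<union> R\<inverse>)\<^sup>*" for y
    using that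
  proof (induction rule: rtrancl_induct)
    case base
    show ?case using \<open>i0 \<in> I\<close> hd_in_set[OF nonempty[OF \<open>i0 < k\<close>]] unfolding U_def by blast
  next
    case (step y z)
    then obtain l where l: "l < k" "y \<in> set (W l)" "z \<in> set (W l)"
      unfolding R_def fam_arcs_def by (blast dest: set_walk_arcsD)
    with step.IH apart show ?case unfolding U_def by blast
  qed
  moreover have "(hd (W i0), hd (W j0)) \<in> (R \<union> R\<inverse>)\<^sup>*"
    using conn heads \<open>i0 < k\<close> \<open>j0 < k\<close> unfolding R_def by blast
  ultimately have "hd (W j0) \<in> U" by blast
  with apart[OF \<open>j0 < k\<close> \<open>j0 \<notin> I\<close>] nonempty[OF \<open>j0 < k\<close>] show False
    unfolding U_def by (metis IntI empty_iff hd_in_set UN_E)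
qed

lemma solution_walk_hd_facility:
  assumes "restricted_instance V A F B" "st_solution V A F B W" "i < kB V B"
  shows "hd (W i) \<in> F"
proof -
  have "is_walk V A (W i)" using assms(2,3) unfolding st_solution_def by blast
  then have "hd (W i) \<in> V" by (auto simp: is_walk_def)
  moreover have "i \<in> {l. l < kB V B \<and> hd (W l) = hd (W i)}" using assms(3) by simp
  then have "card {l. l < kB V B \<and> hd (W l) = hd (W i)} > 0" by (auto simp: card_gt_0_iff)
  ultimately have "B (hd (W i)) > 0" using assms(2) unfolding st_solution_def by simp
  then show ?thesis using assms(1) unfolding restricted_instance_def by blast
qed

lemma walk_family_of_solution:
  assumes "restricted_instance V A F B" "st_solution V A F B W"
  shows "walk_family W (kB V B) F"
proof -
  have nonempty: "\<And>i. i < kB V B \<Longrightarrow> W i \<noteq> []"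
    using assms(2) unfolding st_solution_def is_walk_def by blast
  have heads: "\<And>i. i < kB V B \<Longrightarrow> hd (W i) \<in> F"
    using solution_walk_hd_facility[OF assms] .
  have "\<forall>f\<in>F. \<forall>g\<in>F. (f, g) \<in> (fam_arcs (kB V B) W \<union> (fam_arcs (kB V B) W)\<inverse>)\<^sup>*"
    using assms(2) unfolding st_solution_def by blast
  with nonempty heads show ?thesis
    using solution_walks_overlap[OF nonempty heads] by unfold_locales
qed

lemma tree_like_solution_of_solution:
  assumes inst: "restricted_instance V A F B" and "F \<noteq> {}" and sol: "st_solution V A F B W"
  shows "\<exists>W'. tree_like_solution V (transitive_closure_arcs A) F B W' \<and>
    card (fam_verts (kB V B) W') \<le> 2 * card F - 1"
proof -
  define k where "k = kB V B"
  interpret walk_family W k F using walk_family_of_solution[OF inst sol] unfolding k_def .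
  obtain P where "saturated_skeleton {..<k} P" using saturated_skeleton_exists by blast
  then have sk: "skeleton {..<k} P" and cover: "\<And>i. i < k \<Longrightarrow> F \<inter> set (W i) \<subseteq> verts P"
    and bound: "k \<noteq> 0 \<Longrightarrow> card (verts P) + 1 \<le> 2 * card (F \<inter> verts P)"
    unfolding saturated_skeleton_def by auto
  have "F \<subseteq> fam_verts k W" using sol unfolding st_solution_def k_def by blast
  then have F: "F \<subseteq> verts P" using cover unfolding fam_verts_def by blast
  have "k \<noteq> 0" using \<open>F \<subseteq> fam_verts k W\<close> \<open>F \<noteq> {}\<close> unfolding fam_verts_def by auto
  define W' where "W' = subwalk P"
  have dist: "\<And>i. i < k \<Longrightarrow> distinct (W' i)" and "\<And>i. i < k \<Longrightarrow> 0 \<in> P i"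
    and disj: "\<And>i j. i < k \<Longrightarrow> j < k \<Longrightarrow> i \<noteq> j \<Longrightarrow> path_edges (W' i) \<inter> path_edges (W' j) = {}"
    using sk unfolding skeleton_def W'_def by auto
  then have hd: "\<And>i. i < k \<Longrightarrow> W' i \<noteq> [] \<and> hd (W' i) = hd (W i)"
    using nths_hd walk_nonempty unfolding W'_def subwalk_def by blast
  have "tree_like_solution V (transitive_closure_arcs A) F B W'"
  proof (rule tree_like_solution_if_rooted_tree, fold k_def)
    have "\<And>i. i < k \<Longrightarrow> is_walk V A (W i)" using sol unfolding st_solution_def k_def by blast
    then show "\<forall>i<k. is_walk V (transitive_closure_arcs A) (W' i)"
      using is_walk_nths_transitive_closure dist hd unfolding W'_def subwalk_def by blast
    have "{i. i < k \<and> hd (W' i) = v} = {i. i < k \<and> hd (W i) = v}" for v using hd by auto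
    then show "\<forall>v\<in>V. card {i. i < k \<and> hd (W' i) = v} = B v"
      using sol unfolding st_solution_def k_def by simp
    show "rooted_tree (fam_verts k W') (\<Union>i<k. path_edges (W' i))"
      using sk unfolding skeleton_def verts_def edges_def fam_verts_def W'_def by blast
    show "F \<subseteq> fam_verts k W'" using F unfolding verts_def fam_verts_def W'_def .
  qed (use dist disj in auto)
  moreover have "card (fam_verts k W') \<le> 2 * card F - 1"
    using bound[OF \<open>k \<noteq> 0\<close>] F unfolding verts_def fam_verts_def W'_def by (simp add: Int_absorb2)
  ultimately show ?thesis unfolding k_def by blast
qed

theorem lemma2:
  fixes V :: "'a set" and A :: "('a \<times> 'a) set" and F :: "'a set" and B :: "'a \<Rightarrow> nat"
  assumes "restricted_instance V A F B"
    and "F \<noteq> {}"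
  shows "(\<exists>W. st_solution V A F B W) \<longleftrightarrow>
         (\<exists>W. tree_like_solution V (transitive_closure_arcs A) F B W \<and>
              card (fam_verts (kB V B) W) \<le> 2 * card F - 1)"
proof
  assume "\<exists>W. st_solution V A F B W"
  then show "\<exists>W. tree_like_solution V (transitive_closure_arcs A) F B W \<and>
      card (fam_verts (kB V B) W) \<le> 2 * card F - 1"
    using tree_like_solution_of_solution[OF assms] by blast
next
  assume "\<exists>W. tree_like_solution V (transitive_closure_arcs A) F B W \<and>
      card (fam_verts (kB V B) W) \<le> 2 * card F - 1"
  then obtain W where "st_solution V (transitive_closure_arcs A) F B W"
    unfolding tree_like_solution_def by blast
  moreover have "A \<subseteq> V \<times> V"
    using assms(1) unfolding restricted_instance_def st_instance_def by blast
  ultimately show "\<exists>W. st_solution V A F B W" by (rule st_solution_of_transitive_closure[rotated])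
qed

end
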